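(* Let $(A,\succ_A,\prec_A)$ be an anti-pre-Leibniz algebra with sub-adjacent Leibniz algebra $(A,\circ_A)$. Define multiplications on $A\oplus A^*$ by $$(x+a^* )\circ_{1}(y+b^* )=x\circ_A y-\mathcal L^*_{\succ_A}(x)b^*+(\mathcal L^*_{\succ_A}+\mathcal R^*_{\prec_A})(y)a^*,$$ $$(x+a^* )\circ_{2}(y+b^* )=x\circ_A y+\mathcal L^*_{\circ_A}(x)b^*-(\mathcal L^*_{\circ_A}+\mathcal R^*_{\circ_A})(y)a^*,$$ for $x,y\in A$, $a^*,b^*\in A^*$. Then $(A\oplus A^*,\circ_1,\circ_2)$ is a compatible Leibniz algebra if and only if $(A,\succ_A,\prec_A)$ is an admissible Novikov dialgebra.
   Context: All vector spaces are finite-dimensional over a field $\mathbb K$ of characteristic zero. For a multiplication $\ast$, $\mathcal L_\ast(x)y=x\ast y$, $\mathcal R_\ast(x)y=y\ast x$; for $f:A\to\mathrm{End}(V)$, $f^*:A\to\mathrm{End}(V^* )$ is $\langle f^*(x)u^*,v\rangle=-\langle u^*,f(x)v\rangle$. A Leibniz algebra is a vector space with multiplication $\circ$ satisfying $x\circ(y\circ z)=(x\circ y)\circ z+y\circ(x\circ z)$. A compatible Leibniz algebra is $(B,\circ_1,\circ_2)$ with both $(B,\circ_1),(B,\circ_2)$ Leibniz algebras and, for all $x,y,z$: $x\circ_2(y\circ_1 z)+x\circ_1(y\circ_2 z)-(x\circ_1 y)\circ_2 z-(x\circ_2 y)\circ_1 z-y\circ_2(x\circ_1 z)-y\circ_1(x\circ_2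 z)=0$. For multiplications $\succ_A,\prec_A$ set $x\circ_A y=x\succ_A y+x\prec_A y$. Identities for all $x,y,z$: (AL1) $(x\circ_A y)\prec_A z=x\succ_A(y\circ_A z)-y\succ_A(x\circ_A z)$; (AL2) $(x\circ_A y)\succ_A z=y\succ_A(x\succ_A z)-x\succ_A(y\succ_A z)$; (AL3) $x\prec_A(y\circ_A z)=(y\succ_A x)\prec_A z-y\succ_A(x\prec_A z)$; (AL4) $(x\succ_A y)\prec_A z=-(y\prec_A x)\prec_A z$; (AN1) $(x\succ_A y)\succ_A z=-(y\prec_A x)\succ_A z$; (AN2) $x\prec_A(y\prec_A z)-y\prec_A(x\prec_A z)=2(x\prec_A y)\prec_A z-2(y\prec_A x)\prec_A z$; (AN3) $(x\succ_A y)\succ_A z+y\prec_A(x\succ_A z)=2x\succ_A(y\circ_A z)$. An anti-pre-Leibniz algebra satisfies (AL1)–(AL4), and its sub-adjacent Leibniz algebra is $(A,\circ_A)$; an admissible Novikov dialgebra satisfies (AL2)–(AL4) and (AN1)–(AN3). *)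

theory Defs
  imports Main "HOL-Library.Function_Algebras" "HOL-Library.Product_Plus"
begin

text \<open>Convention: the finite-dimensional space A over the field 'k (char 0) is realised
  in coordinates as 'n \<Rightarrow> 'k for a finite index type 'n (a fixed basis).
  The dual space A* is realised as 'n \<Rightarrow> 'k too, via the nondegenerate pairing
  pair a v = (sum over i of a i * v i).\<close>

type_synonym ('k,'n) vect = "'n \<Rightarrow> 'k"

definition smul :: "'k::field \<Rightarrow> ('k,'n) vect \<Rightarrow> ('k,'n) vect" where
  "smul c v = (\<lambda>i. c * v i)"

definition pair :: "('k::field,'n::finite) vect \<Rightarrow> ('k,'n) vect \<Rightarrow> 'k" where
  "pair a v = (\<Sum>i\<in>UNIV. a i * v i)"

definition bvec :: "'n \<Rightarrow> ('k::field,'n) vect" where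
  "bvec j = (\<lambda>i. if i = j then 1 else 0)"

definition bilinear_mult :: "(('k::field,'n) vect \<Rightarrow> ('k,'n) vect \<Rightarrow> ('k,'n) vect) \<Rightarrow> bool" where
  "bilinear_mult m \<longleftrightarrow>
     (\<forall>x y z. m (x + y) z = m x z + m y z) \<and>
     (\<forall>x y z. m x (y + z) = m x y + m x z) \<and>
     (\<forall>c x y. m (smul c x) y = smul c (m x y)) \<and>
     (\<forall>c x y. m x (smul c y) = smul c (m x y))"

text \<open>Dual map: for linear f on A, dual_op f is the map on A* with
  pair (dual_op f a) v = - pair a (f v).\<close>
definition dual_op :: "(('k::field,'n::finite) vect \<Rightarrow> ('k,'n) vect) \<Rightarrow> ('k,'n) vect \<Rightarrow> ('k,'n) vect" where
  "dual_op f a = (\<lambda>j. - (\<Sum>k\<in>UNIV. a k * f (bvec j) k))"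

definition Lm :: "('v \<Rightarrow> 'v \<Rightarrow> 'v) \<Rightarrow> 'v \<Rightarrow> 'v \<Rightarrow> 'v" where
  "Lm m x = (\<lambda>y. m x y)"

definition Rm :: "('v \<Rightarrow> 'v \<Rightarrow> 'v) \<Rightarrow> 'v \<Rightarrow> 'v \<Rightarrow> 'v" where
  "Rm m x = (\<lambda>y. m y x)"

definition circ :: "('v \<Rightarrow> 'v \<Rightarrow> 'v::plus) \<Rightarrow> ('v \<Rightarrow> 'v \<Rightarrow> 'v) \<Rightarrow> 'v \<Rightarrow> 'v \<Rightarrow> 'v" where
  "circ s p x y = s x y + p x y"

definition leibniz :: "('v \<Rightarrow> 'v \<Rightarrow> 'v::ab_group_add) \<Rightarrow> bool" where
  "leibniz m \<longleftrightarrow> (\<forall>x y z. m x (m y z) = m (m x y) z + m y (m x z))"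

definition compatible_leibniz :: "('v \<Rightarrow> 'v \<Rightarrow> 'v::ab_group_add) \<Rightarrow> ('v \<Rightarrow> 'v \<Rightarrow> 'v) \<Rightarrow> bool" where
  "compatible_leibniz m1 m2 \<longleftrightarrow> leibniz m1 \<and> leibniz m2 \<and>
     (\<forall>x y z. m2 x (m1 y z) + m1 x (m2 y z) - m2 (m1 x y) z - m1 (m2 x y) z
               - m2 y (m1 x z) - m1 y (m2 x z) = 0)"

definition AL1 :: "('v \<Rightarrow> 'v \<Rightarrow> 'v::ab_group_add) \<Rightarrow> ('v \<Rightarrow> 'v \<Rightarrow> 'v) \<Rightarrow> bool" where
  "AL1 s p \<longleftrightarrow> (\<forall>x y z. p (circ s p x y) z = s x (circ s p y z) - s y (circ s p x z))"

definition AL2 :: "('v \<Rightarrow> 'v \<Rightarrow> 'v::ab_group_add) \<Rightarrow> ('v \<Rightarrow> 'v \<Rightarrow> 'v) \<Rightarrow> bool" where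
  "AL2 s p \<longleftrightarrow> (\<forall>x y z. s (circ s p x y) z = s y (s x z) - s x (s y z))"

definition AL3 :: "('v \<Rightarrow> 'v \<Rightarrow> 'v::ab_group_add) \<Rightarrow> ('v \<Rightarrow> 'v \<Rightarrow> 'v) \<Rightarrow> bool" where
  "AL3 s p \<longleftrightarrow> (\<forall>x y z. p x (circ s p y z) = p (s y x) z - s y (p x z))"

definition AL4 :: "('v \<Rightarrow> 'v \<Rightarrow> 'v::ab_group_add) \<Rightarrow> ('v \<Rightarrow> 'v \<Rightarrow> 'v) \<Rightarrow> bool" where
  "AL4 s p \<longleftrightarrow> (\<forall>x y z. p (s x y) z = - p (p y x) z)"

definition AN1 :: "('v \<Rightarrow> 'v \<Rightarrow> 'v::ab_group_add) \<Rightarrow> ('v \<Rightarrow> 'v \<Rightarrow> 'v) \<Rightarrow> bool" where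
  "AN1 s p \<longleftrightarrow> (\<forall>x y z. s (s x y) z = - s (p y x) z)"

text \<open>The factor 2 is written as doubling (v + v).\<close>
definition AN2 :: "('v \<Rightarrow> 'v \<Rightarrow> 'v::ab_group_add) \<Rightarrow> ('v \<Rightarrow> 'v \<Rightarrow> 'v) \<Rightarrow> bool" where
  "AN2 s p \<longleftrightarrow> (\<forall>x y z. p x (p y z) - p y (p x z) =
      (p (p x y) z - p (p y x) z) + (p (p x y) z - p (p y x) z))"

definition AN3 :: "('v \<Rightarrow> 'v \<Rightarrow> 'v::ab_group_add) \<Rightarrow> ('v \<Rightarrow> 'v \<Rightarrow> 'v) \<Rightarrow> bool" where
  "AN3 s p \<longleftrightarrow> (\<forall>x y z. s (s x y) z + p y (s x z) = s x (circ s p y z) + s x (circ s p y z))"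

definition anti_pre_leibniz :: "(('k::field,'n) vect \<Rightarrow> ('k,'n) vect \<Rightarrow> ('k,'n) vect) \<Rightarrow> (('k,'n) vect \<Rightarrow> ('k,'n) vect \<Rightarrow> ('k,'n) vect) \<Rightarrow> bool" where
  "anti_pre_leibniz s p \<longleftrightarrow> bilinear_mult s \<and> bilinear_mult p \<and>
     AL1 s p \<and> AL2 s p \<and> AL3 s p \<and> AL4 s p"

definition admissible_novikov_dialgebra :: "(('k::field,'n) vect \<Rightarrow> ('k,'n) vect \<Rightarrow> ('k,'n) vect) \<Rightarrow> (('k,'n) vect \<Rightarrow> ('k,'n) vect \<Rightarrow> ('k,'n) vect) \<Rightarrow> bool" where
  "admissible_novikov_dialgebra s p \<longleftrightarrow> bilinear_mult s \<and> bilinear_mult p \<and>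
     AL2 s p \<and> AL3 s p \<and> AL4 s p \<and> AN1 s p \<and> AN2 s p \<and> AN3 s p"

definition circ1 :: "(('k::field,'n::finite) vect \<Rightarrow> ('k,'n) vect \<Rightarrow> ('k,'n) vect) \<Rightarrow> (('k,'n) vect \<Rightarrow> ('k,'n) vect \<Rightarrow> ('k,'n) vect)
     \<Rightarrow> ('k,'n) vect \<times> ('k,'n) vect \<Rightarrow> ('k,'n) vect \<times> ('k,'n) vect \<Rightarrow> ('k,'n) vect \<times> ('k,'n) vect" where
  "circ1 s p u w = (case u of (x, a) \<Rightarrow> case w of (y, b) \<Rightarrow>
     (circ s p x y,
      - dual_op (Lm s x) b + (dual_op (Lm s y) a + dual_op (Rm p y) a)))"

definition circ2 :: "(('k::field,'n::finite) vect \<Rightarrow> ('k,'n) vect \<Rightarrow> ('k,'n) vect) \<Rightarrow> (('k,'n) vect \<Rightarrow> ('k,'n) vect \<Rightarrow> ('k,'n) vect)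
     \<Rightarrow> ('k,'n) vect \<times> ('k,'n) vect \<Rightarrow> ('k,'n) vect \<times> ('k,'n) vect \<Rightarrow> ('k,'n) vect \<times> ('k,'n) vect" where
  "circ2 s p u w = (case u of (x, a) \<Rightarrow> case w of (y, b) \<Rightarrow>
     (circ s p x y,
      dual_op (Lm (circ s p) x) b - (dual_op (Lm (circ s p) y) a + dual_op (Rm (circ s p) y) a)))"

end

theory Submission
  imports Defs "HOL.Modules"
begin

text \<open>The multiplications \<open>\<circ>\<^sub>1\<close> and \<open>\<circ>\<^sub>2\<close> are semidirect products of the
  sub-adjacent Leibniz algebra \<open>(A, \<circ>)\<close> with two representations on \<open>A\<^sup>*\<close>:
  \<open>(-L\<^sup>*\<^sub>\<succ>, L\<^sup>*\<^sub>\<succ> + R\<^sup>*\<^sub>\<prec>)\<close>, which is a representation by (AL2)--(AL4), and the coadjoint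
  representation \<open>(L\<^sup>*\<^sub>\<circ>, -L\<^sup>*\<^sub>\<circ> - R\<^sup>*\<^sub>\<circ>)\<close>. Two semidirect products over the same
  Leibniz algebra form a compatible Leibniz algebra iff the mixed terms of the representation
  axioms vanish. Pairing with \<open>A\<close> turns the three mixed identities into identities in \<open>A\<close>
  which, modulo (AL1)--(AL4), are (AN2), (AN3) up to (AN2), and (AN1).\<close>

type_synonym 'v binop = "'v \<Rightarrow> 'v \<Rightarrow> 'v"

locale biadditive =
  fixes f :: "'a::ab_group_add \<Rightarrow> 'b::ab_group_add \<Rightarrow> 'c::ab_group_add"
  assumes add_left: "f (x + y) z = f x z + f y z"
    and add_right: "f x (u + v) = f x u + f x v"
begin

lemma additive_left: "additive (\<lambda>x. f x z)"
  by unfold_locales (rule add_left)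

lemma additive_right: "additive (f x)"
  by unfold_locales (rule add_right)

lemmas zero_left = additive.zero[OF additive_left]
  and zero_right = additive.zero[OF additive_right]
  and minus_left = additive.minus[OF additive_left]
  and minus_right = additive.minus[OF additive_right]
  and diff_left = additive.diff[OF additive_left]
  and diff_right = additive.diff[OF additive_right]

lemmas distribs = add_left add_right zero_left zero_right minus_left minus_right diff_left diff_right

end

lemma biadditive_pair: "biadditive pair"
  by unfold_locales (simp_all add: pair_def distrib_left distrib_right sum.distrib)

lemmas pair_distribs [simp] = biadditive.distribs[OF biadditive_pair]

(* Vectors form a ring pointwise, and simp's numeral simprocs may turn v + v into 2 * v. *)
lemma pair_numeral_right [simp]: "pair a (numeral k * v) = numeral k * pair a v"
  by (simp add: pair_def sum_distrib_left mult_ac)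

lemma pair_bvec_left: "pair (bvec j) v = v j"
  by (simp add: pair_def bvec_def if_distrib[where f = "\<lambda>c. c * _"] cong: if_cong)

lemma pair_bvec_right: "pair a (bvec j) = a j"
  by (simp add: pair_def bvec_def if_distrib[where f = "\<lambda>c. _ * c"] cong: if_cong)

lemma dual_eqI: "(\<And>v. pair \<alpha> v = pair \<beta> v) \<Longrightarrow> \<alpha> = \<beta>"
  by (rule ext) (metis pair_bvec_right)

lemma vect_eqI: "(\<And>a. pair a x = pair a y) \<Longrightarrow> x = y"
  by (rule ext) (metis pair_bvec_left)

lemma dual_eq_iff_pairing:
  assumes "\<And>a v. pair (F a) v = pair (G a) v + pair a (E v)"
  shows "(\<forall>a. F a = G a) \<longleftrightarrow> (\<forall>v. E v = 0)"
proof
  assume "\<forall>a. F a = G a"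
  then show "\<forall>v. E v = 0"
    using assms by (auto intro: vect_eqI)
next
  assume "\<forall>v. E v = 0"
  then show "\<forall>a. F a = G a"
    using assms by (auto intro: dual_eqI)
qed

lemma vect_basis_expansion:
  fixes v :: "('k::field, 'n::finite) vect"
  shows "v = (\<Sum>j\<in>UNIV. smul (v j) (bvec j))"
proof (rule vect_eqI)
  fix a
  have "pair a (\<Sum>j\<in>UNIV. smul (v j) (bvec j)) = (\<Sum>j\<in>UNIV. pair a (smul (v j) (bvec j)))"
    by (rule additive.sum[OF biadditive.additive_right[OF biadditive_pair]])
  also have "\<dots> = pair a v"
    by (simp add: pair_def smul_def bvec_def if_distrib mult.commute cong: if_cong)
  finally show "pair a v = pair a (\<Sum>j\<in>UNIV. smul (v j) (bvec j))" ..
qed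

lemma pair_smul_right: "pair a (smul c v) = c * pair a v"
  by (simp add: pair_def smul_def sum_distrib_left mult.left_commute)

lemma pair_dual_op:
  assumes "additive f" and "\<And>c v. f (smul c v) = smul c (f v)"
  shows "pair (dual_op f a) v = - pair a (f v)"
proof -
  have "pair a (f v) = (\<Sum>j\<in>UNIV. pair a (f (smul (v j) (bvec j))))"
    by (subst vect_basis_expansion) (simp add: additive.sum[OF assms(1)]
        additive.sum[OF biadditive.additive_right[OF biadditive_pair]])
  also have "\<dots> = (\<Sum>j\<in>UNIV. v j * pair a (f (bvec j)))"
    by (simp add: assms(2) pair_smul_right)
  also have "\<dots> = - pair (dual_op f a) v"
    by (simp add: pair_def dual_op_def sum_negf mult.commute)
  finally show ?thesis by simp
qed

lemma biadditive_bilinear_mult: "bilinear_mult m \<Longrightarrow> biadditive m"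
  by unfold_locales (simp_all add: bilinear_mult_def)

lemma bilinear_mult_circ: "bilinear_mult s \<Longrightarrow> bilinear_mult p \<Longrightarrow> bilinear_mult (circ s p)"
  by (simp add: bilinear_mult_def circ_def smul_def fun_eq_iff distrib_left add_ac)

lemma pair_dual_op_Lm:
  "bilinear_mult m \<Longrightarrow> pair (dual_op (Lm m x) a) v = - pair a (m x v)"
  using pair_dual_op[of "Lm m x"] by (simp add: bilinear_mult_def additive_def Lm_def)

lemma pair_dual_op_Rm:
  "bilinear_mult m \<Longrightarrow> pair (dual_op (Rm m x) a) v = - pair a (m v x)"
  using pair_dual_op[of "Rm m x"] by (simp add: bilinear_mult_def additive_def Rm_def)

definition semidirect ::
  "'v binop \<Rightarrow> ('v \<Rightarrow> 'w \<Rightarrow> 'w) \<Rightarrow> ('v \<Rightarrow> 'w \<Rightarrow> 'w::plus) \<Rightarrow> ('v \<times> 'w) binop"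
  where "semidirect m l r = (\<lambda>(x, u) (y, w). (m x y, l x w + r y u))"

lemma semidirect_Pair [simp]: "semidirect m l r (x, u) (y, w) = (m x y, l x w + r y u)"
  by (simp add: semidirect_def)

definition leibniz_rep ::
  "'v binop \<Rightarrow> ('v \<Rightarrow> 'w \<Rightarrow> 'w::ab_group_add) \<Rightarrow> ('v \<Rightarrow> 'w \<Rightarrow> 'w) \<Rightarrow> bool"
  where "leibniz_rep m l r \<longleftrightarrow>
    (\<forall>x y w. l (m x y) w = l x (l y w) - l y (l x w)) \<and>
    (\<forall>x y w. r (m x y) w = l x (r y w) - r y (l x w)) \<and>
    (\<forall>x y w. r y (l x w) = - r y (r x w))"

(* The mixed terms of the axioms of leibniz_rep when expanded for the sum (l1 + l2, r1 + r2). *)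
definition compatible_reps ::
  "'v binop \<Rightarrow> ('v \<Rightarrow> 'w \<Rightarrow> 'w::ab_group_add) \<Rightarrow> ('v \<Rightarrow> 'w \<Rightarrow> 'w)
     \<Rightarrow> ('v \<Rightarrow> 'w \<Rightarrow> 'w) \<Rightarrow> ('v \<Rightarrow> 'w \<Rightarrow> 'w) \<Rightarrow> bool"
  where "compatible_reps m l1 r1 l2 r2 \<longleftrightarrow>
    (\<forall>x y w. l1 (m x y) w + l2 (m x y) w =
       l1 x (l2 y w) + l2 x (l1 y w) - l1 y (l2 x w) - l2 y (l1 x w)) \<and>
    (\<forall>x y w. r1 (m x y) w + r2 (m x y) w =
       l1 x (r2 y w) + l2 x (r1 y w) - r1 y (l2 x w) - r2 y (l1 x w)) \<and>
    (\<forall>x y w. r1 y (l2 x w) + r2 y (l1 x w) = - r1 y (r2 x w) - r2 y (r1 x w))"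

lemma leibniz_prod_left:
  assumes "leibniz m"
  shows "m (m x y) z = m x (m y z) - m y (m x z)"
  using assms unfolding leibniz_def by (metis add_diff_cancel)

lemma leibniz_semidirect_iff:
  fixes m :: "'v::ab_group_add binop" and l r :: "'v \<Rightarrow> 'w::ab_group_add \<Rightarrow> 'w"
  assumes "leibniz m" and "biadditive m" "biadditive l" "biadditive r"
  shows "leibniz (semidirect m l r) \<longleftrightarrow> leibniz_rep m l r"
proof
  note zeros = biadditive.zero_left[OF assms(2)] biadditive.zero_right[OF assms(2)]
    biadditive.zero_left[OF assms(3)] biadditive.zero_right[OF assms(3)]
    biadditive.zero_left[OF assms(4)] biadditive.zero_right[OF assms(4)]
  assume "leibniz (semidirect m l r)"
  note identity = this[unfolded leibniz_def, rule_format]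
  have "l (m x y) w = l x (l y w) - l y (l x w)" for x y w
    using identity[of "(x, 0)" "(y, 0)" "(0, w)"] by (simp add: zeros algebra_simps)
  moreover have r_mult: "r (m x y) w = l x (r y w) - r y (l x w)" for x y w
    using identity[of "(x, 0)" "(0, w)" "(y, 0)"] by (simp add: zeros algebra_simps)
  moreover have "r y (l x w) = - r y (r x w)" for x y w
    using identity[of "(0, w)" "(x, 0)" "(y, 0)"]
    by (simp add: zeros r_mult algebra_simps eq_neg_iff_add_eq_0)
  ultimately show "leibniz_rep m l r"
    unfolding leibniz_rep_def by blast
next
  assume "leibniz_rep m l r"
  then have rep: "l (m x y) w = l x (l y w) - l y (l x w)"
    "r (m x y) w = l x (r y w) - r y (l x w)" "r y (l x w) = - r y (r x w)" for x y w
    unfolding leibniz_rep_def by blast+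
  show "leibniz (semidirect m l r)"
    unfolding leibniz_def split_paired_All
    by (simp add: rep biadditive.distribs[OF assms(3)] biadditive.distribs[OF assms(4)]
        leibniz_prod_left[OF assms(1)] algebra_simps)
qed

definition compatible_mults :: "'v::ab_group_add binop \<Rightarrow> 'v binop \<Rightarrow> bool"
  where "compatible_mults m1 m2 \<longleftrightarrow> (\<forall>x y z.
    m2 x (m1 y z) + m1 x (m2 y z) - m2 (m1 x y) z - m1 (m2 x y) z - m2 y (m1 x z) - m1 y (m2 x z) = 0)"

lemma compatible_leibniz_iff:
  "compatible_leibniz m1 m2 \<longleftrightarrow> leibniz m1 \<and> leibniz m2 \<and> compatible_mults m1 m2"
  by (simp add: compatible_leibniz_def compatible_mults_def)

lemma compatible_mults_semidirect_iff:
  fixes m :: "'v::ab_group_add binop" and l1 r1 l2 r2 :: "'v \<Rightarrow> 'w::ab_group_add \<Rightarrow> 'w"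
  assumes "leibniz m" and "biadditive m"
    and "biadditive l1" "biadditive r1" "biadditive l2" "biadditive r2"
  shows "compatible_mults (semidirect m l1 r1) (semidirect m l2 r2) \<longleftrightarrow>
    compatible_reps m l1 r1 l2 r2"
proof
  note distribs = biadditive.distribs[OF assms(2)] biadditive.distribs[OF assms(3)]
    biadditive.distribs[OF assms(4)] biadditive.distribs[OF assms(5)] biadditive.distribs[OF assms(6)]
  assume "compatible_mults (semidirect m l1 r1) (semidirect m l2 r2)"
  note identity = this[unfolded compatible_mults_def, rule_format]
  have "l1 (m x y) w + l2 (m x y) w =
      l1 x (l2 y w) + l2 x (l1 y w) - l1 y (l2 x w) - l2 y (l1 x w)" for x y w
    using identity[of "(x, 0)" "(y, 0)" "(0, w)"]
    by (simp add: distribs zero_prod_def algebra_simps right_minus_eq)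
  moreover have r_mult: "r1 (m x y) w + r2 (m x y) w =
      l1 x (r2 y w) + l2 x (r1 y w) - r1 y (l2 x w) - r2 y (l1 x w)" for x y w
    using identity[of "(x, 0)" "(0, w)" "(y, 0)"]
    by (simp add: distribs zero_prod_def algebra_simps right_minus_eq)
  moreover have "r1 y (l2 x w) + r2 y (l1 x w) = - r1 y (r2 x w) - r2 y (r1 x w)" for x y w
    using identity[of "(0, w)" "(x, 0)" "(y, 0)"] r_mult[of x y w]
    by (simp add: distribs zero_prod_def algebra_simps right_minus_eq
        eq_neg_iff_add_eq_0 neg_eq_iff_add_eq_0)
  ultimately show "compatible_reps m l1 r1 l2 r2"
    unfolding compatible_reps_def by blast
next
  note distribs = biadditive.distribs[OF assms(3)] biadditive.distribs[OF assms(4)]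
    biadditive.distribs[OF assms(5)] biadditive.distribs[OF assms(6)]
  assume "compatible_reps m l1 r1 l2 r2"
  then have reps:
    "l1 (m x y) w = l1 x (l2 y w) + l2 x (l1 y w) - l1 y (l2 x w) - l2 y (l1 x w) - l2 (m x y) w"
    "r1 (m x y) w = l1 x (r2 y w) + l2 x (r1 y w) - r1 y (l2 x w) - r2 y (l1 x w) - r2 (m x y) w"
    "r1 y (l2 x w) = - r1 y (r2 x w) - r2 y (r1 x w) - r2 y (l1 x w)" for x y w
    unfolding compatible_reps_def by (simp_all add: algebra_simps)
  show "compatible_mults (semidirect m l1 r1) (semidirect m l2 r2)"
    unfolding compatible_mults_def split_paired_All
    by (simp add: reps distribs leibniz_prod_left[OF assms(1)] algebra_simps)
qed

lemma compatible_semidirect_iff: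
  fixes m :: "'v::ab_group_add binop" and l1 r1 l2 r2 :: "'v \<Rightarrow> 'w::ab_group_add \<Rightarrow> 'w"
  assumes "leibniz m" and "biadditive m"
    and "biadditive l1" "biadditive r1" "biadditive l2" "biadditive r2"
  shows "compatible_leibniz (semidirect m l1 r1) (semidirect m l2 r2) \<longleftrightarrow>
    leibniz_rep m l1 r1 \<and> leibniz_rep m l2 r2 \<and> compatible_reps m l1 r1 l2 r2"
  unfolding compatible_leibniz_iff
  using leibniz_semidirect_iff[OF assms(1-4)] leibniz_semidirect_iff[OF assms(1,2,5,6)]
    compatible_mults_semidirect_iff[OF assms]
  by blast

definition coadjoint_l :: "('k::field, 'n::finite) vect binop \<Rightarrow> ('k, 'n) vect binop"
  where "coadjoint_l m x a = dual_op (Lm m x) a"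

definition coadjoint_r :: "('k::field, 'n::finite) vect binop \<Rightarrow> ('k, 'n) vect binop"
  where "coadjoint_r m x a = - (dual_op (Lm m x) a + dual_op (Rm m x) a)"

definition anti_pre_dual_l :: "('k::field, 'n::finite) vect binop \<Rightarrow> ('k, 'n) vect binop"
  where "anti_pre_dual_l s x a = - dual_op (Lm s x) a"

definition anti_pre_dual_r :: "('k::field, 'n::finite) vect binop \<Rightarrow> ('k, 'n) vect binop \<Rightarrow> ('k, 'n) vect binop"
  where "anti_pre_dual_r s p x a = dual_op (Lm s x) a + dual_op (Rm p x) a"

lemma pair_coadjoint_l: "bilinear_mult m \<Longrightarrow> pair (coadjoint_l m x a) v = - pair a (m x v)"
  by (simp add: coadjoint_l_def pair_dual_op_Lm)

lemma pair_coadjoint_r: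
  "bilinear_mult m \<Longrightarrow> pair (coadjoint_r m x a) v = pair a (m x v) + pair a (m v x)"
  by (simp add: coadjoint_r_def pair_dual_op_Lm pair_dual_op_Rm)

lemma pair_anti_pre_dual_l: "bilinear_mult s \<Longrightarrow> pair (anti_pre_dual_l s x a) v = pair a (s x v)"
  by (simp add: anti_pre_dual_l_def pair_dual_op_Lm)

lemma pair_anti_pre_dual_r:
  "bilinear_mult s \<Longrightarrow> bilinear_mult p \<Longrightarrow>
    pair (anti_pre_dual_r s p x a) v = - pair a (s x v) - pair a (p v x)"
  by (simp add: anti_pre_dual_r_def pair_dual_op_Lm pair_dual_op_Rm)

lemma biadditive_coadjoint:
  assumes "bilinear_mult m"
  shows "biadditive (coadjoint_l m)" "biadditive (coadjoint_r m)"
  by (unfold_locales; rule dual_eqI;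
      simp add: pair_coadjoint_l pair_coadjoint_r assms biadditive.distribs[OF biadditive_bilinear_mult[OF assms]])+

lemma biadditive_anti_pre_dual:
  assumes "bilinear_mult s" "bilinear_mult p"
  shows "biadditive (anti_pre_dual_l s)" "biadditive (anti_pre_dual_r s p)"
  by (unfold_locales; rule dual_eqI;
      simp add: pair_anti_pre_dual_l pair_anti_pre_dual_r assms
        biadditive.distribs[OF biadditive_bilinear_mult[OF assms(1)]]
        biadditive.distribs[OF biadditive_bilinear_mult[OF assms(2)]])+

lemma leibniz_rep_coadjoint:
  assumes "bilinear_mult m" "leibniz m"
  shows "leibniz_rep m (coadjoint_l m) (coadjoint_r m)"
  unfolding leibniz_rep_def
  by (intro conjI allI; rule dual_eqI)
     (simp_all add: pair_coadjoint_l pair_coadjoint_r assms leibniz_prod_left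
       biadditive.distribs[OF biadditive_bilinear_mult[OF assms(1)]])

(* Left minus right side of (AL1)--(AN3); linear relations among these hold for every
   pair of bilinear multiplications. *)
definition al1_defect :: "'v::ab_group_add binop \<Rightarrow> 'v binop \<Rightarrow> 'v \<Rightarrow> 'v \<Rightarrow> 'v \<Rightarrow> 'v"
  where "al1_defect s p x y z = p (circ s p x y) z - (s x (circ s p y z) - s y (circ s p x z))"

definition al2_defect :: "'v::ab_group_add binop \<Rightarrow> 'v binop \<Rightarrow> 'v \<Rightarrow> 'v \<Rightarrow> 'v \<Rightarrow> 'v"
  where "al2_defect s p x y z = s (circ s p x y) z - (s y (s x z) - s x (s y z))"

definition al3_defect :: "'v::ab_group_add binop \<Rightarrow> 'v binop \<Rightarrow> 'v \<Rightarrow> 'v \<Rightarrow> 'v \<Rightarrow> 'v"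
  where "al3_defect s p x y z = p x (circ s p y z) - (p (s y x) z - s y (p x z))"

definition al4_defect :: "'v::ab_group_add binop \<Rightarrow> 'v binop \<Rightarrow> 'v \<Rightarrow> 'v \<Rightarrow> 'v \<Rightarrow> 'v"
  where "al4_defect s p x y z = p (s x y) z + p (p y x) z"

definition an1_defect :: "'v::ab_group_add binop \<Rightarrow> 'v binop \<Rightarrow> 'v \<Rightarrow> 'v \<Rightarrow> 'v \<Rightarrow> 'v"
  where "an1_defect s p x y z = s (s x y) z + s (p y x) z"

definition an2_defect :: "'v::ab_group_add binop \<Rightarrow> 'v binop \<Rightarrow> 'v \<Rightarrow> 'v \<Rightarrow> 'v \<Rightarrow> 'v"
  where "an2_defect s p x y z = p x (p y z) - p y (p x z)
    - ((p (p x y) z - p (p y x) z) + (p (p x y) z - p (p y x) z))"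

definition an3_defect :: "'v::ab_group_add binop \<Rightarrow> 'v binop \<Rightarrow> 'v \<Rightarrow> 'v \<Rightarrow> 'v \<Rightarrow> 'v"
  where "an3_defect s p x y z = s (s x y) z + p y (s x z) - (s x (circ s p y z) + s x (circ s p y z))"

lemmas defect_defs = al1_defect_def al2_defect_def al3_defect_def al4_defect_def
  an1_defect_def an2_defect_def an3_defect_def

lemma AN_iff_defect:
  "AN1 s p \<longleftrightarrow> (\<forall>x y z. an1_defect s p x y z = 0)"
  "AN2 s p \<longleftrightarrow> (\<forall>x y z. an2_defect s p x y z = 0)"
  "AN3 s p \<longleftrightarrow> (\<forall>x y z. an3_defect s p x y z = 0)"
  by (simp_all add: AN1_def AN2_def AN3_def defect_defs eq_neg_iff_add_eq_0)

locale anti_pre_leibniz_algebra =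
  fixes s p :: "('k::field, 'n::finite) vect binop"
  assumes anti_pre_leibniz: "anti_pre_leibniz s p"
begin

lemma bilinear: "bilinear_mult s" "bilinear_mult p" "bilinear_mult (circ s p)"
  using anti_pre_leibniz bilinear_mult_circ by (auto simp: anti_pre_leibniz_def)

lemmas distribs = biadditive.distribs[OF biadditive_bilinear_mult[OF bilinear(1)]]
  biadditive.distribs[OF biadditive_bilinear_mult[OF bilinear(2)]]

lemma AL_rewrites:
  "s (circ s p x y) z = s y (s x z) - s x (s y z)"
  "p x (circ s p y z) = p (s y x) z - s y (p x z)"
  "p (s x y) z = - p (p y x) z"
  using anti_pre_leibniz by (simp_all add: anti_pre_leibniz_def AL2_def AL3_def AL4_def)

lemma AL_defects_zero:
  "al1_defect s p x y z = 0" "al2_defect s p x y z = 0"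
  "al3_defect s p x y z = 0" "al4_defect s p x y z = 0"
  using anti_pre_leibniz
  by (simp_all add: anti_pre_leibniz_def AL1_def AL2_def AL3_def AL4_def defect_defs)

lemma leibniz_circ: "leibniz (circ s p)"
  unfolding leibniz_def
proof (intro allI)
  fix x y z
  have "circ s p x (circ s p y z) - (circ s p (circ s p x y) z + circ s p y (circ s p x z)) =
      al1_defect s p y x z - al1_defect s p x y z - al2_defect s p x y z
      + al3_defect s p x y z - al3_defect s p y x z - al4_defect s p x y z"
    by (simp add: defect_defs circ_def distribs algebra_simps)
  then show "circ s p x (circ s p y z) = circ s p (circ s p x y) z + circ s p y (circ s p x z)"
    by (simp add: AL_defects_zero)
qed

lemma leibniz_rep_anti_pre_dual:
  "leibniz_rep (circ s p) (anti_pre_dual_l s) (anti_pre_dual_r s p)"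
  unfolding leibniz_rep_def
  by (intro conjI allI; rule dual_eqI)
     (simp_all add: pair_anti_pre_dual_l pair_anti_pre_dual_r bilinear AL_rewrites distribs)

lemma compatible_reps_dual_iff:
  "compatible_reps (circ s p) (anti_pre_dual_l s) (anti_pre_dual_r s p)
     (coadjoint_l (circ s p)) (coadjoint_r (circ s p)) \<longleftrightarrow> AN1 s p \<and> AN2 s p \<and> AN3 s p"
proof -
  have "compatible_reps (circ s p) (anti_pre_dual_l s) (anti_pre_dual_r s p)
      (coadjoint_l (circ s p)) (coadjoint_r (circ s p)) \<longleftrightarrow>
    (\<forall>x y v. an2_defect s p x y v + al1_defect s p x y v - al1_defect s p y x v
        - al3_defect s p x y v + al3_defect s p y x v - al4_defect s p x y v = 0) \<and>
    (\<forall>x y v. an2_defect s p x v y - an2_defect s p x y v - an3_defect s p x v y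
        - al1_defect s p x y v + al1_defect s p x v y + al1_defect s p y x v
        + al3_defect s p x y v - al3_defect s p y x v + al3_defect s p v x y
        + al4_defect s p x y v - al4_defect s p x v y - al4_defect s p x v y = 0) \<and>
    (\<forall>x y v. - an1_defect s p y v x - al1_defect s p y v x - al1_defect s p v y x
        - al4_defect s p y v x = 0)"
    unfolding compatible_reps_def
    by (intro arg_cong2[where f = conj] dual_eq_iff_pairing all_cong1;
        simp only: pair_distribs pair_anti_pre_dual_l[OF bilinear(1)]
         pair_anti_pre_dual_r[OF bilinear(1,2)] pair_coadjoint_l[OF bilinear(3)]
         pair_coadjoint_r[OF bilinear(3)];
        simp add: defect_defs circ_def distribs; simp add: algebra_simps)
  also have "\<dots> \<longleftrightarrow> (\<forall>x y v. an2_defect s p x y v = 0) \<and>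
      (\<forall>x y v. an2_defect s p x v y - an2_defect s p x y v - an3_defect s p x v y = 0) \<and>
      (\<forall>x y v. an1_defect s p y v x = 0)"
    by (simp add: AL_defects_zero)
  also have "\<dots> \<longleftrightarrow> AN1 s p \<and> AN2 s p \<and> AN3 s p"
    by (auto simp: AN_iff_defect)
  finally show ?thesis .
qed

end

lemma circ1_eq_semidirect:
  "circ1 s p = semidirect (circ s p) (anti_pre_dual_l s) (anti_pre_dual_r s p)"
  by (simp add: fun_eq_iff circ1_def anti_pre_dual_l_def anti_pre_dual_r_def split: prod.split)

lemma circ2_eq_semidirect:
  "circ2 s p = semidirect (circ s p) (coadjoint_l (circ s p)) (coadjoint_r (circ s p))"
  by (simp add: fun_eq_iff circ2_def coadjoint_l_def coadjoint_r_def split: prod.split)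

theorem proposition3p8:
  fixes succ prec :: "('k::field_char_0, 'n::finite) vect \<Rightarrow> ('k,'n) vect \<Rightarrow> ('k,'n) vect"
  assumes "anti_pre_leibniz succ prec"
  shows "compatible_leibniz (circ1 succ prec) (circ2 succ prec) \<longleftrightarrow>
         admissible_novikov_dialgebra succ prec"
proof -
  interpret anti_pre_leibniz_algebra succ prec
    by (rule anti_pre_leibniz_algebra.intro[OF assms])
  have "compatible_leibniz (circ1 succ prec) (circ2 succ prec) \<longleftrightarrow>
      compatible_reps (circ succ prec) (anti_pre_dual_l succ) (anti_pre_dual_r succ prec)
        (coadjoint_l (circ succ prec)) (coadjoint_r (circ succ prec))"
    unfolding circ1_eq_semidirect circ2_eq_semidirect
    using compatible_semidirect_iff[OF leibniz_circ biadditive_bilinear_mult[OF bilinear(3)]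
        biadditive_anti_pre_dual[OF bilinear(1,2)] biadditive_coadjoint[OF bilinear(3)]]
      leibniz_rep_anti_pre_dual leibniz_rep_coadjoint[OF bilinear(3) leibniz_circ]
    by blast
  also have "\<dots> \<longleftrightarrow> AN1 succ prec \<and> AN2 succ prec \<and> AN3 succ prec"
    by (rule compatible_reps_dual_iff)
  finally show ?thesis
    using assms by (auto simp: admissible_novikov_dialgebra_def anti_pre_leibniz_def)
qed

end
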